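(* Let $s>1$ be an integer. Then for every positive integer $n$, $$\tau_s(n)=\zeta(s)\sum_{r=1}^{\infty}\frac{c_r^{s}(n)}{r^s},$$ where the series converges absolutely.
   Context: For $s\in\mathbb{N}$ and integers $a,b$, $(a,b)_s$ denotes the largest $d^s$ with $d\in\mathbb{N}$ such that $d^s\mid a$ and $d^s\mid b$. The Cohen–Ramanujan sum is defined for $r,s\in\mathbb{N}$ and $n\in\mathbb{Z}$ by $$c_r^{s}(n)=\sum_{\substack{h=1\\ (h,r^s)_s=1}}^{r^s} e^{2\pi i n h/r^s}.$$ For $n\in\mathbb{N}$, $\tau_s(n)$ is the number of positive integers $d$ such that $d^s\mid n$. $\zeta$ denotes the Riemann zeta function. *)

theory Defs
  imports "HOL-Analysis.Analysis"
begin

text \<open>(a,b)_s: the largest d^s (d a positive integer) dividing both a and b.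
  Only used with b = r^s > 0, where the set is finite and nonempty.\<close>
definition gcd_pow :: "nat \<Rightarrow> int \<Rightarrow> int \<Rightarrow> int" where
  "gcd_pow s a b = Max {(int d) ^ s | d. d \<ge> 1 \<and> (int d) ^ s dvd a \<and> (int d) ^ s dvd b}"

definition cohen_ramanujan :: "nat \<Rightarrow> nat \<Rightarrow> int \<Rightarrow> complex" where
  "cohen_ramanujan s r n =
     (\<Sum>h \<in> {h \<in> {1..r ^ s}. gcd_pow s (int h) (int (r ^ s)) = 1}.
        exp (2 * pi * \<i> * of_int n * of_nat h / of_nat (r ^ s)))"

definition tau_pow :: "nat \<Rightarrow> nat \<Rightarrow> nat" where
  "tau_pow s n = card {d :: nat. d > 0 \<and> d ^ s dvd n}"

definition zeta_nat :: "nat \<Rightarrow> real" where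
  "zeta_nat s = (\<Sum>k. 1 / (real (Suc k)) ^ s)"

end

theory Submission
  imports Defs "HOL-Computational_Algebra.Primes"
begin

(* Grouping the h in {1..m^s} according to the largest divisor e of m with e^s dividing h
   shows that the divisor sum of the Cohen-Ramanujan sums, sum over d dividing m of c_d^s(n),
   is the full exponential sum over {1..m^s}, which is m^s if m^s divides n and 0 otherwise.
   Moebius inversion then bounds |c_r^s(n)| by the sum of d^s over d^s dividing n, uniformly in r,
   so for s > 1 the series converges absolutely.  Multiplying it by zeta(s) = sum of k^-s as a
   Dirichlet product gives sum over r of r^-s times the divisor sum above, i.e. the number of
   r with r^s dividing n, which is tau_s(n). *)

lemma div_dvd_self: "(b::nat) dvd a \<Longrightarrow> a div b dvd a"
  by (metis dvd_div_mult_self dvd_triv_left)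

lemma sum_Pow_neg_one_power_card:
  assumes "finite A"
  shows "(\<Sum>T\<in>Pow A. (-1::'a::ring_1) ^ card T) = (if A = {} then 1 else 0)"
proof (cases "A = {}")
  case False
  then have "card {T \<in> Pow A. even (card T)} = card {T \<in> Pow A. odd (card T)}"
    using card_subsupersets_even_odd[OF assms, of "{}"] by (auto simp: Pow_def)
  then show ?thesis
    using False assms by (simp add: sum_alternating_cancels)
qed simp

lemma prod_primes_dvd_iff:
  fixes x :: nat
  assumes "finite T" "\<forall>p\<in>T. prime p" "x > 0"
  shows "\<Prod>T dvd x \<longleftrightarrow> T \<subseteq> prime_factors x"
  using assms
proof (induction T rule: finite_induct)
  case (insert p T)
  have "coprime p (\<Prod>T)"
    using insert by (metis prime_dvd_prod_iff primes_dvd_imp_eq prime_imp_coprime insert_iff)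
  then have "\<Prod>(insert p T) dvd x \<longleftrightarrow> p dvd x \<and> \<Prod>T dvd x"
    using insert by (auto intro: divides_mult dest: dvd_mult_left dvd_mult_right)
  then show ?case
    using insert by (auto simp: prime_factors_dvd)
qed simp

lemma prod_subset_prime_factors_dvd:
  fixes r :: nat
  assumes "r > 0" "T \<subseteq> prime_factors r"
  shows "\<Prod>T dvd r"
  using assms by (subst prod_primes_dvd_iff) (auto dest: finite_subset)

lemma Pow_prime_factors_div:
  fixes r d :: nat
  assumes "r > 0" "d dvd r"
  shows "{T \<in> Pow (prime_factors r). d dvd r div \<Prod>T} = Pow (prime_factors (r div d))"
proof -
  have "d \<noteq> 0" "r div d > 0"
    using assms by (auto simp: dvd_div_eq_0_iff)
  have "d dvd r div \<Prod>T \<longleftrightarrow> T \<subseteq> prime_factors (r div d)" if "T \<subseteq> prime_factors r" for T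
  proof -
    have "\<Prod>T dvd r" "\<Prod>T \<noteq> 0"
      using prod_subset_prime_factors_dvd[OF assms(1) that] assms(1) by auto
    then have "d dvd r div \<Prod>T \<longleftrightarrow> \<Prod>T dvd r div d"
      using assms(2) \<open>d \<noteq> 0\<close> by (simp add: dvd_div_iff_mult mult.commute)
    also have "\<dots> \<longleftrightarrow> T \<subseteq> prime_factors (r div d)"
      using that \<open>r div d > 0\<close> by (subst prod_primes_dvd_iff) (auto dest: finite_subset)
    finally show ?thesis .
  qed
  moreover have "prime_factors (r div d) \<subseteq> prime_factors r"
    using assms by (intro dvd_prime_factors) (auto intro: div_dvd_self)
  ultimately show ?thesis
    by blast
qed

(* Moebius inversion without the Moebius function: the squarefree divisors of r are the products
   of the sets T of prime factors of r, and mu (\<Prod>T) = (-1) ^ card T. *)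
lemma moebius_inversion_prime_subsets:
  fixes F G :: "nat \<Rightarrow> 'a::comm_ring_1"
  assumes "r > 0" and G: "\<And>m. m dvd r \<Longrightarrow> G m = (\<Sum>d | d dvd m. F d)"
  shows "F r = (\<Sum>T\<in>Pow (prime_factors r). (-1) ^ card T * G (r div \<Prod>T))"
proof -
  let ?P = "prime_factors r"
  have alternating: "(\<Sum>T\<in>{T \<in> Pow ?P. d dvd r div \<Prod>T}. (-1::'a) ^ card T) = (if d = r then 1 else 0)"
    if "d dvd r" for d
  proof -
    have "prime_factors (r div d) = {} \<longleftrightarrow> r div d = 1"
      using that \<open>r > 0\<close> by (auto simp: prime_factorization_empty_iff dvd_div_eq_0_iff)
    also have "\<dots> \<longleftrightarrow> d = r"
      using dvd_mult_div_cancel[OF that] \<open>r > 0\<close> by auto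
    finally show ?thesis
      unfolding Pow_prime_factors_div[OF \<open>r > 0\<close> that] sum_Pow_neg_one_power_card[OF finite_set_mset]
      by simp
  qed
  have "(\<Sum>T\<in>Pow ?P. (-1) ^ card T * G (r div \<Prod>T))
      = (\<Sum>T\<in>Pow ?P. \<Sum>d\<in>{d \<in> {d. d dvd r}. d dvd r div \<Prod>T}. (-1) ^ card T * F d)"
  proof (rule sum.cong[OF refl])
    fix T assume "T \<in> Pow ?P"
    then have "r div \<Prod>T dvd r"
      using prod_subset_prime_factors_dvd \<open>r > 0\<close> by (auto intro: div_dvd_self)
    then have "{d \<in> {d. d dvd r}. d dvd r div \<Prod>T} = {d. d dvd r div \<Prod>T}"
      using dvd_trans by blast
    then show "(-1) ^ card T * G (r div \<Prod>T)
        = (\<Sum>d\<in>{d \<in> {d. d dvd r}. d dvd r div \<Prod>T}. (-1) ^ card T * F d)"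
      using G[OF \<open>r div \<Prod>T dvd r\<close>] by (simp add: sum_distrib_left)
  qed
  also have "\<dots> = (\<Sum>d | d dvd r. \<Sum>T\<in>{T \<in> Pow ?P. d dvd r div \<Prod>T}. (-1) ^ card T * F d)"
    using \<open>r > 0\<close> by (intro sum.swap_restrict) auto
  also have "\<dots> = (\<Sum>d | d dvd r. F d * (\<Sum>T\<in>{T \<in> Pow ?P. d dvd r div \<Prod>T}. (-1) ^ card T))"
    by (simp add: sum_distrib_left mult.commute)
  also have "\<dots> = (\<Sum>d | d dvd r. if d = r then F d else 0)"
    using alternating by (intro sum.cong) auto
  also have "\<dots> = F r"
    using \<open>r > 0\<close> by simp
  finally show ?thesis ..
qed

lemma norm_moebius_inverse_le:
  fixes F G :: "nat \<Rightarrow> 'a::real_normed_field"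
  assumes "r > 0" and "\<And>m. m dvd r \<Longrightarrow> G m = (\<Sum>d | d dvd m. F d)"
  shows "norm (F r) \<le> (\<Sum>d | d dvd r. norm (G d))"
proof -
  let ?P = "prime_factors r" and ?q = "\<lambda>T. r div \<Prod>T"
  have prod_dvd: "\<Prod>T dvd r" if "T \<in> Pow ?P" for T
    using that \<open>r > 0\<close> by (auto intro: prod_subset_prime_factors_dvd)
  have "inj_on ?q (Pow ?P)"
  proof (rule inj_onI)
    fix T U assume TU: "T \<in> Pow ?P" "U \<in> Pow ?P" "?q T = ?q U"
    have "\<Prod>T = r div ?q T" "\<Prod>U = r div ?q U"
      using prod_dvd[OF TU(1)] prod_dvd[OF TU(2)] \<open>r > 0\<close> by auto
    then have "\<Prod>T = \<Prod>U"
      using TU(3) by simp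
    moreover have "inj_on Prod (Pow ?P)"
      by (rule inj_on_Prod_primes) (auto dest: finite_subset)
    ultimately show "T = U"
      using TU by (auto dest: inj_onD)
  qed
  have "norm (F r) = norm (\<Sum>T\<in>Pow ?P. (-1) ^ card T * G (?q T))"
    using moebius_inversion_prime_subsets[OF assms] by simp
  also have "\<dots> \<le> (\<Sum>T\<in>Pow ?P. norm ((-1) ^ card T * G (?q T)))"
    by (rule norm_sum)
  also have "\<dots> = (\<Sum>d\<in>?q ` Pow ?P. norm (G d))"
    using \<open>inj_on ?q (Pow ?P)\<close> by (simp add: sum.reindex norm_mult norm_power)
  also have "\<dots> \<le> (\<Sum>d | d dvd r. norm (G d))"
    using prod_dvd \<open>r > 0\<close> by (intro sum_mono2) (auto intro: div_dvd_self)
  finally show ?thesis .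
qed

lemma sum_roots_of_unity_powers:
  fixes q :: nat and n :: int
  assumes "q > 0"
  shows "(\<Sum>h=1..q. exp (2 * pi * \<i> * of_int n * of_nat h / of_nat q))
       = (if int q dvd n then of_nat q else 0)"
proof -
  define z where "z = exp (2 * pi * \<i> * of_int n / of_nat q)"
  have "exp (2 * pi * \<i> * of_int n * of_nat h / of_nat q) = z ^ h" for h :: nat
    unfolding z_def by (simp add: exp_of_nat_mult[symmetric] mult_ac)
  then have "(\<Sum>h=1..q. exp (2 * pi * \<i> * of_int n * of_nat h / of_nat q)) = (\<Sum>h=1..q. z ^ h)"
    by simp
  also have "\<dots> = (if int q dvd n then of_nat q else 0)"
  proof (cases "int q dvd n")
    case True
    then obtain k where "n = int q * k"
      by blast
    then have "z = exp (2 * of_int k * pi * \<i>)"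
      unfolding z_def using \<open>q > 0\<close> by (simp add: field_simps)
    also have "\<dots> = 1"
      by (rule exp_integer_2pi) simp
    finally show ?thesis
      using True by simp
  next
    case False
    have "z \<noteq> 1"
    proof
      assume "z = 1"
      then obtain j :: int where "2 * pi * of_int n / of_nat q = of_int (2 * j) * pi"
        unfolding z_def exp_eq_1 by auto
      then have "n = j * int q"
        using \<open>q > 0\<close> by (simp add: field_simps) (metis of_int_eq_iff of_int_mult of_int_of_nat_eq)
      with False show False
        by simp
    qed
    have "z ^ q = exp (2 * of_int n * pi * \<i>)"
      unfolding z_def using \<open>q > 0\<close> by (simp add: exp_of_nat_mult[symmetric] field_simps)
    also have "\<dots> = 1"
      by (rule exp_integer_2pi) simp
    finally have "(1 - z) * (\<Sum>h=1..q. z ^ h) = 0"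
      using \<open>q > 0\<close> by (subst sum_gp_multiplied) auto
    with \<open>z \<noteq> 1\<close> False show ?thesis
      by simp
  qed
  finally show ?thesis .
qed

lemma lcm_power_nat: "lcm (a ^ n) (b ^ n) = lcm a b ^ n" for a b :: nat
proof (cases "a = 0 \<or> b = 0")
  case True
  then show ?thesis
    by (metis lcm_1_iff_nat lcm_eq_0_iff nat_power_eq_Suc_0_iff power_0_left)
next
  case False
  have "gcd (a ^ n) (b ^ n) * lcm (a ^ n) (b ^ n) = (gcd a b * lcm a b) ^ n"
    by (simp only: prod_gcd_lcm_nat[symmetric] power_mult_distrib)
  also have "\<dots> = gcd (a ^ n) (b ^ n) * lcm a b ^ n"
    by (simp only: power_mult_distrib gcd_exp)
  finally show ?thesis
    using False by simp
qed

lemma gcd_pow_eq_1_iff: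
  assumes "s > 0" "r > 0"
  shows "gcd_pow s (int h) (int (r ^ s)) = 1 \<longleftrightarrow> (\<forall>d. d dvd r \<longrightarrow> d ^ s dvd h \<longrightarrow> d = 1)"
proof -
  define S where "S = {int d ^ s | d. d \<ge> 1 \<and> int d ^ s dvd int h \<and> int d ^ s dvd int (r ^ s)}"
  have S_eq: "S = (\<lambda>d. int d ^ s) ` {d. d \<ge> 1 \<and> d dvd r \<and> d ^ s dvd h}"
    using \<open>s > 0\<close> unfolding S_def by (auto simp flip: of_nat_power)
  have "finite S"
    unfolding S_eq using \<open>r > 0\<close> by (auto intro: finite_subset[of _ "{..r}"] dest: dvd_imp_le)
  moreover have "1 \<in> S"
    unfolding S_eq by force
  ultimately have "gcd_pow s (int h) (int (r ^ s)) = 1 \<longleftrightarrow> (\<forall>x\<in>S. x \<le> 1)"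
    unfolding gcd_pow_def S_def[symmetric] by (subst Max_eq_iff) auto
  also have "\<dots> \<longleftrightarrow> (\<forall>d\<ge>1. d dvd r \<longrightarrow> d ^ s dvd h \<longrightarrow> d = 1)"
    using \<open>s > 0\<close> unfolding S_eq by (auto simp: le_Suc_eq simp flip: of_nat_power)
  also have "\<dots> \<longleftrightarrow> (\<forall>d. d dvd r \<longrightarrow> d ^ s dvd h \<longrightarrow> d = 1)"
    using \<open>r > 0\<close> by auto
  finally show ?thesis .
qed

(* The s-th power of greatest_pow_divisor s m h is (h, m^s)_s. *)
definition greatest_pow_divisor :: "nat \<Rightarrow> nat \<Rightarrow> nat \<Rightarrow> nat" where
  "greatest_pow_divisor s m h = Max {d. d dvd m \<and> d ^ s dvd h}"

lemma greatest_pow_divisor: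
  fixes s m h :: nat
  assumes "m > 0"
  defines "e \<equiv> greatest_pow_divisor s m h"
  shows "e dvd m" "e ^ s dvd h" "\<And>d. d dvd m \<Longrightarrow> d ^ s dvd h \<Longrightarrow> d dvd e"
proof -
  let ?A = "{d. d dvd m \<and> d ^ s dvd h}"
  have "finite ?A"
    using \<open>m > 0\<close> by auto
  moreover have "1 \<in> ?A"
    by simp
  ultimately have "e \<in> ?A"
    unfolding e_def greatest_pow_divisor_def by (intro Max_in) auto
  then show "e dvd m" "e ^ s dvd h"
    by auto
  fix d assume "d dvd m" "d ^ s dvd h"
  with \<open>e \<in> ?A\<close> have "lcm d e \<in> ?A"
    by (auto simp flip: lcm_power_nat)
  then have "lcm d e \<le> e"
    unfolding e_def greatest_pow_divisor_def using \<open>finite ?A\<close> by simp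
  moreover have "e \<le> lcm d e"
    using \<open>d dvd m\<close> \<open>e dvd m\<close> \<open>m > 0\<close>
    by (intro dvd_imp_le) (auto simp: lcm_pos_nat dvd_pos_nat)
  ultimately have "lcm d e = e"
    by simp
  then show "d dvd e"
    by (metis dvd_lcm1)
qed

lemma greatest_pow_divisor_eq_iff:
  fixes s m e k h :: nat
  assumes "s > 0" "m > 0" "m = e * k"
  shows "greatest_pow_divisor s m h = e
    \<longleftrightarrow> (\<exists>h'. h = e ^ s * h' \<and> gcd_pow s (int h') (int (k ^ s)) = 1)"
proof -
  let ?E = "greatest_pow_divisor s m h"
  have "e > 0" "k > 0"
    using assms by auto
  show ?thesis
  proof
    assume "?E = e"
    then obtain h' where h': "h = e ^ s * h'"
      using greatest_pow_divisor(2)[OF \<open>m > 0\<close>] by (auto elim!: dvdE)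
    have "d = 1" if "d dvd k" "d ^ s dvd h'" for d
    proof -
      have "e * d dvd ?E"
        using that assms h' by (intro greatest_pow_divisor(3)) (auto simp: power_mult_distrib)
      then show "d = 1"
        using \<open>?E = e\<close> \<open>e > 0\<close> by simp
    qed
    then show "\<exists>h'. h = e ^ s * h' \<and> gcd_pow s (int h') (int (k ^ s)) = 1"
      using h' gcd_pow_eq_1_iff[OF \<open>s > 0\<close> \<open>k > 0\<close>] by blast
  next
    assume "\<exists>h'. h = e ^ s * h' \<and> gcd_pow s (int h') (int (k ^ s)) = 1"
    then obtain h' where h': "h = e ^ s * h'"
      and h'_coprime: "\<forall>d. d dvd k \<longrightarrow> d ^ s dvd h' \<longrightarrow> d = 1"
      using gcd_pow_eq_1_iff[OF \<open>s > 0\<close> \<open>k > 0\<close>] by blast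
    have "e dvd ?E"
      using assms h' by (intro greatest_pow_divisor(3)) auto
    then obtain t where t: "?E = e * t"
      by (auto elim!: dvdE)
    have "e * t dvd e * k" "e ^ s * t ^ s dvd e ^ s * h'"
      using greatest_pow_divisor(1,2)[OF \<open>m > 0\<close>, of s h] assms h' t
      by (simp_all add: power_mult_distrib)
    then have "t dvd k" "t ^ s dvd h'"
      using \<open>e > 0\<close> by simp_all
    then show "?E = e"
      using h'_coprime t by simp
  qed
qed

lemma sum_divisors_cohen_ramanujan:
  assumes "s > 0" "m > 0"
  shows "(\<Sum>d | d dvd m. cohen_ramanujan s d n) = (if int (m ^ s) dvd n then of_nat (m ^ s) else 0)"
proof -
  define f where "f h = exp (2 * pi * \<i> * of_int n * of_nat h / of_nat (m ^ s))" for h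
  let ?E = "greatest_pow_divisor s m"
  have "(\<Sum>h=1..m^s. f h) = (\<Sum>e | e dvd m. \<Sum>h\<in>{h \<in> {1..m^s}. ?E h = e}. f h)"
    using greatest_pow_divisor(1) \<open>m > 0\<close> by (intro sum.group[symmetric]) auto
  also have "\<dots> = (\<Sum>e | e dvd m. cohen_ramanujan s (m div e) n)"
  proof (rule sum.cong[OF refl])
    fix e assume "e \<in> {e. e dvd m}"
    define k where "k = m div e"
    have "m = e * k" "e > 0" "k > 0"
      using \<open>e \<in> {e. e dvd m}\<close> \<open>m > 0\<close> by (auto simp: k_def dvd_div_eq_0_iff)
    have "{h \<in> {1..m^s}. ?E h = e}
        = (\<lambda>h'. e ^ s * h') ` {h' \<in> {1..k^s}. gcd_pow s (int h') (int (k ^ s)) = 1}"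
      unfolding greatest_pow_divisor_eq_iff[OF \<open>s > 0\<close> \<open>m > 0\<close> \<open>m = e * k\<close>]
      using \<open>m = e * k\<close> \<open>e > 0\<close> by (auto simp: power_mult_distrib)
    moreover have "f (e ^ s * h') = exp (2 * pi * \<i> * of_int n * of_nat h' / of_nat (k ^ s))" for h'
      unfolding f_def using \<open>m = e * k\<close> \<open>e > 0\<close> by (simp add: power_mult_distrib mult_ac)
    ultimately show "(\<Sum>h\<in>{h \<in> {1..m^s}. ?E h = e}. f h) = cohen_ramanujan s (m div e) n"
      using \<open>e > 0\<close> by (simp add: sum.reindex inj_on_def cohen_ramanujan_def flip: k_def)
  qed
  also have "\<dots> = (\<Sum>d | d dvd m. cohen_ramanujan s d n)"
    using \<open>m > 0\<close> by (intro sum.reindex_bij_witness[of _ "\<lambda>d. m div d" "\<lambda>d. m div d"])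
      (auto intro: div_dvd_self)
  finally show ?thesis
    using sum_roots_of_unity_powers[of "m ^ s" n] \<open>m > 0\<close> by (simp add: f_def)
qed

lemma finite_pow_divisors:
  fixes s n :: nat
  assumes "s > 0" "n > 0"
  shows "finite {d. d > 0 \<and> d ^ s dvd n}"
proof (rule finite_subset)
  show "{d. d > 0 \<and> d ^ s dvd n} \<subseteq> {..n}"
    using assms by (auto intro: order.trans[OF self_le_power] dvd_imp_le)
qed simp

lemma norm_cohen_ramanujan_le:
  fixes s n r :: nat
  assumes "s > 0" "n > 0" "r > 0"
  shows "norm (cohen_ramanujan s r (int n)) \<le> (\<Sum>d | d > 0 \<and> d ^ s dvd n. real (d ^ s))"
proof -
  define D where "D = {d. d > 0 \<and> d ^ s dvd n}"
  define G where "G m = (if int (m ^ s) dvd int n then of_nat (m ^ s) else 0 :: complex)" for m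
  have "norm (cohen_ramanujan s r (int n)) \<le> (\<Sum>d | d dvd r. norm (G d))"
    using assms by (intro norm_moebius_inverse_le)
      (auto simp: G_def sum_divisors_cohen_ramanujan dvd_pos_nat)
  also have "\<dots> = (\<Sum>d \<in> {d. d dvd r} \<inter> D. real (d ^ s))"
    using \<open>r > 0\<close> by (intro sum.mono_neutral_cong_right)
      (auto simp: G_def D_def dvd_pos_nat norm_power simp flip: of_nat_power)
  also have "\<dots> \<le> (\<Sum>d\<in>D. real (d ^ s))"
    using finite_pow_divisors[OF \<open>s > 0\<close> \<open>n > 0\<close>] by (intro sum_mono2) (auto simp: D_def)
  finally show ?thesis
    unfolding D_def .
qed

lemma suminf_Suc_eq_infsetsum:
  fixes a :: "nat \<Rightarrow> 'a::{banach, second_countable_topology}"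
  assumes "summable (\<lambda>r. norm (a (Suc r)))"
  shows "Infinite_Set_Sum.abs_summable_on a {0<..}" and "(\<Sum>r. a (Suc r)) = infsetsum a {0<..}"
proof -
  have bij: "bij_betw Suc UNIV {0<..}"
    by (rule bij_betw_byWitness[where f' = "\<lambda>r. r - 1"]) auto
  have summable: "Infinite_Set_Sum.abs_summable_on (\<lambda>r. a (Suc r)) UNIV"
    using assms by (simp add: abs_summable_on_nat_iff')
  then show "Infinite_Set_Sum.abs_summable_on a {0<..}"
    using abs_summable_on_reindex_bij_betw[OF bij] by blast
  have "infsetsum (\<lambda>r. a (Suc r)) UNIV = infsetsum a {0<..}"
    by (rule infsetsum_reindex_bij_betw[OF bij])
  with infsetsum_nat'[OF summable] show "(\<Sum>r. a (Suc r)) = infsetsum a {0<..}"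
    by simp
qed

lemma infsetsum_dirichlet_convolution:
  fixes f g :: "nat \<Rightarrow> 'a::{banach, real_normed_field, second_countable_topology}"
  assumes "summable (\<lambda>r. norm (f (Suc r)))" "summable (\<lambda>r. norm (g (Suc r)))"
  shows "infsetsum (\<lambda>r. \<Sum>d | d dvd r. f d * g (r div d)) {0<..} = (\<Sum>r. f (Suc r)) * (\<Sum>r. g (Suc r))"
proof -
  let ?P = "{0::nat<..}" and ?S = "Sigma {0::nat<..} (\<lambda>r. {d. d dvd r})"
  let ?F = "\<lambda>(x, y). f x * g y" and ?h = "\<lambda>(r, d). (d, r div d)"
  have bij: "bij_betw ?h ?S (?P \<times> ?P)"
    by (rule bij_betw_byWitness[where f' = "\<lambda>(d, k). (d * k, d)"])
      (auto simp: dvd_pos_nat div_greater_zero_iff dvd_imp_le)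
  have "Infinite_Set_Sum.abs_summable_on ?F (?P \<times> ?P)"
    using assms by (intro abs_summable_on_product suminf_Suc_eq_infsetsum) auto
  then have "Infinite_Set_Sum.abs_summable_on (\<lambda>x. ?F (?h x)) ?S"
    using abs_summable_on_reindex_bij_betw[OF bij] by blast
  have "(\<Sum>r. f (Suc r)) * (\<Sum>r. g (Suc r)) = infsetsum f ?P * infsetsum g ?P"
    using assms by (simp add: suminf_Suc_eq_infsetsum(2))
  also have "\<dots> = infsetsum ?F (?P \<times> ?P)"
    using assms by (intro infsetsum_product[symmetric] suminf_Suc_eq_infsetsum) auto
  also have "\<dots> = infsetsum (\<lambda>x. ?F (?h x)) ?S"
    by (rule infsetsum_reindex_bij_betw[OF bij, symmetric])
  also have "\<dots> = infsetsum (\<lambda>r. infsetsum (\<lambda>d. f d * g (r div d)) {d. d dvd r}) ?P"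
    using \<open>Infinite_Set_Sum.abs_summable_on (\<lambda>x. ?F (?h x)) ?S\<close>
    by (subst infsetsum_Sigma) (auto simp: case_prod_unfold)
  also have "\<dots> = infsetsum (\<lambda>r. \<Sum>d | d dvd r. f d * g (r div d)) ?P"
    by (intro infsetsum_cong) auto
  finally show ?thesis ..
qed

lemma summable_inverse_Suc_power:
  assumes "s > 1"
  shows "summable (\<lambda>r. 1 / real (Suc r) ^ s)"
proof -
  have "summable (\<lambda>r. inverse (real r ^ s))"
    using assms by (intro inverse_power_summable) auto
  then have "summable (\<lambda>r. inverse (real (Suc r) ^ s))"
    by (subst summable_Suc_iff)
  then show ?thesis
    by (simp add: divide_inverse del: of_nat_Suc)
qed

lemma summable_norm_cohen_ramanujan_over_power:
  fixes s n :: nat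
  assumes "s > 1" "n > 0"
  shows "summable (\<lambda>r. norm (cohen_ramanujan s (Suc r) (int n) / of_nat (Suc r ^ s)))"
proof (rule summable_comparison_test)
  let ?C = "\<Sum>d | d > 0 \<and> d ^ s dvd n. real (d ^ s)"
  show "summable (\<lambda>r. ?C * (1 / real (Suc r) ^ s))"
    using summable_inverse_Suc_power[OF \<open>s > 1\<close>] by (rule summable_mult)
  show "\<exists>N. \<forall>r\<ge>N. norm (norm (cohen_ramanujan s (Suc r) (int n) / of_nat (Suc r ^ s)))
      \<le> ?C * (1 / real (Suc r) ^ s)"
  proof (intro exI allI impI)
    fix r :: nat
    have "norm (cohen_ramanujan s (Suc r) (int n) / of_nat (Suc r ^ s))
        = norm (cohen_ramanujan s (Suc r) (int n)) / real (Suc r) ^ s"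
      by (simp add: norm_divide norm_power del: of_nat_Suc)
    also have "\<dots> \<le> ?C / real (Suc r) ^ s"
      using assms by (intro divide_right_mono norm_cohen_ramanujan_le) auto
    finally show "norm (norm (cohen_ramanujan s (Suc r) (int n) / of_nat (Suc r ^ s)))
        \<le> ?C * (1 / real (Suc r) ^ s)"
      by simp
  qed
qed

lemma sum_divisors_cohen_ramanujan_over_power:
  assumes "s > 0" "r > 0"
  shows "(\<Sum>d | d dvd r. cohen_ramanujan s d n / of_nat (d ^ s) * (1 / of_nat ((r div d) ^ s)))
       = (if int (r ^ s) dvd n then 1 else 0)"
proof -
  have summand: "cohen_ramanujan s d n / of_nat (d ^ s) * (1 / of_nat ((r div d) ^ s))
      = cohen_ramanujan s d n / of_nat (r ^ s)" if "d dvd r" for d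
  proof -
    from \<open>d dvd r\<close> obtain k where "r = d * k"
      by blast
    with \<open>r > 0\<close> show ?thesis
      by (simp add: power_mult_distrib)
  qed
  have "(\<Sum>d | d dvd r. cohen_ramanujan s d n / of_nat (d ^ s) * (1 / of_nat ((r div d) ^ s)))
      = (\<Sum>d | d dvd r. cohen_ramanujan s d n / of_nat (r ^ s))"
    by (intro sum.cong refl summand) simp
  also have "\<dots> = (\<Sum>d | d dvd r. cohen_ramanujan s d n) / of_nat (r ^ s)"
    by (simp add: sum_divide_distrib)
  finally show ?thesis
    using assms by (simp add: sum_divisors_cohen_ramanujan)
qed

lemma tau_pow_eq_infsetsum:
  assumes "s > 0" "n > 0"
  shows "of_nat (tau_pow s n) = infsetsum (\<lambda>r. if int (r ^ s) dvd int n then 1 else 0 :: complex) {0<..}"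
proof -
  have "infsetsum (\<lambda>r. if int (r ^ s) dvd int n then 1 else 0 :: complex) {0<..}
      = infsetsum (\<lambda>_. 1) {d. d > 0 \<and> d ^ s dvd n}"
    by (intro infsetsum_cong_neutral) (auto simp flip: of_nat_power)
  then show ?thesis
    using finite_pow_divisors[OF assms] by (simp add: tau_pow_def)
qed

theorem mainTheorem1:
  fixes s n :: nat
  assumes "s > 1" and "n > 0"
  shows "summable (\<lambda>r. norm (cohen_ramanujan s (Suc r) (int n) / of_nat (Suc r ^ s)))
    \<and> complex_of_real (real (tau_pow s n)) =
        complex_of_real (zeta_nat s) *
          (\<Sum>r. cohen_ramanujan s (Suc r) (int n) / of_nat (Suc r ^ s))"
proof
  let ?a = "\<lambda>r. cohen_ramanujan s r (int n) / of_nat (r ^ s)"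
  let ?z = "\<lambda>r. 1 / of_nat (r ^ s) :: complex"
  show summable_a: "summable (\<lambda>r. norm (?a (Suc r)))"
    using summable_norm_cohen_ramanujan_over_power[OF assms] .
  have summable_z: "summable (\<lambda>r. norm (?z (Suc r)))"
    using summable_inverse_Suc_power[OF \<open>s > 1\<close>] by (simp add: norm_divide norm_power del: of_nat_Suc)
  have zeta: "complex_of_real (zeta_nat s) = (\<Sum>r. ?z (Suc r))"
    unfolding zeta_nat_def using summable_inverse_Suc_power[OF \<open>s > 1\<close>]
    by (subst suminf_of_real) (simp_all del: of_nat_Suc)
  have "complex_of_real (real (tau_pow s n))
      = infsetsum (\<lambda>r. if int (r ^ s) dvd int n then 1 else 0) {0<..}"
    using tau_pow_eq_infsetsum assms by simp
  also have "\<dots> = infsetsum (\<lambda>r. \<Sum>d | d dvd r. ?a d * ?z (r div d)) {0<..}"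
    using \<open>s > 1\<close> by (intro infsetsum_cong[OF _ refl]) (subst sum_divisors_cohen_ramanujan_over_power; simp)
  also have "\<dots> = (\<Sum>r. ?a (Suc r)) * (\<Sum>r. ?z (Suc r))"
    using summable_a summable_z by (rule infsetsum_dirichlet_convolution)
  finally show "complex_of_real (real (tau_pow s n)) = complex_of_real (zeta_nat s) * (\<Sum>r. ?a (Suc r))"
    by (simp add: zeta)
qed

end
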